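(* Let $n,d\ge1$, $p>d$, and let $\Delta$, $Z$, $A=ZZ^{\top}+\Delta$, $f$, $\Lambda_{ii}$ and $d_F$ be as in the context. Let $\delta>0$ and let $S$ be a second-order critical point of $f$ satisfying the proximity condition \[ d_F(S,Z)\le\delta\sqrt{\frac dn}\,\|\Delta\|_{\mathrm{op}}. \] Then \[ \max_{1\le i\le n}\Big\|\sum_{j\ne i}\Delta_{ij}S_j\Big\|_{\mathrm{op}}\le \delta\sqrt{\frac dn}\,\|\Delta\|_{\mathrm{op}}\max_{1\le i\le n}\|\Delta_i\|_{\mathrm{op}}+\max_{1\le i\le n}\|\Delta_i^{\top}Z\|_{\mathrm{op}}, \] and if \[ n\ge\frac{3\delta^2d\|\Delta\|_{\mathrm{op}}^2}{2n}+\max_{1\le i\le n}\Big\|\sum_{j\ne i}\Delta_{ij}S_j\Big\|_{\mathrm{op}}+\|\Delta\|_{\mathrm{op}}, \] then $S$ is the unique global maximizer of both (P) and (SDP) (in the sense that $SS^{\top}$ is the unique global maximizer of (SDP), has rank $d$, and equals $RR^{\top}$ for the global maximizer $R$ of (P)). In particular this conclusion holds whenever \[ n\ge\frac{3\delta^2d\|\Delta\|_{\mathrm{op}}^2}{2n}+\delta\sqrt{\frac dn}\,\|\Delta\|_{\mathrm{op}}\max_{i}\|\Delta_i\|_{\mathrm{op}}+\max_i\|\Delta_i^{\top}Z\|_{\mathrm{op}}+\|\Delta\|_{\mathrm{op}}. \]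
   Context: $\Delta\in\mathbb{R}^{nd\times nd}$ is symmetric with $d\times d$ blocks $\Delta_{ij}$, $\Delta_{ji}=\Delta_{ij}^{\top}$, $\Delta_{ii}=0$; $\Delta_i^{\top}=[\Delta_{i1},\dots,\Delta_{in}]$ is its $i$-th block row. $Z^{\top}=[I_d,\dots,I_d]\in\mathbb{R}^{d\times nd}$, $A=ZZ^{\top}+\Delta$ (so $A_{ij}=I_d+\Delta_{ij}$). (P) is $\max_{R_i\in O(d)}\sum_{i,j}\langle R_iR_j^{\top},A_{ij}\rangle$; (SDP) is $\max\{\langle A,X\rangle: X\succeq0, X_{ii}=I_d\}$. $\mathrm{St}(d,p)=\{S_i\in\mathbb{R}^{d\times p}:S_iS_i^{\top}=I_d\}$; $S\in\mathbb{R}^{nd\times p}$ has blocks $S_i\in\mathrm{St}(d,p)$ and $f(S)=\langle A,SS^{\top}\rangle=\sum_{i,j}\langle A_{ij},S_iS_j^{\top}\rangle$. Put $\Lambda_{ii}=\frac12\sum_{j=1}^n(S_iS_j^{\top}A_{ji}+A_{ij}S_jS_i^{\top})$. The tangent space at $S_i$ is $T_{S_i}=\{Y\in\mathbb{R}^{d\times p}:S_iY^{\top}+YS_i^{\top}=0\}$. $S$ is a second-order critical point of $f$ if $\sum_jA_{ij}S_j=\Lambda_{ii}S_i$ for all $i$ (vanishing Riemannian gradient) and $\sum_i\langle\Lambda_{ii},\dot S_i\dot S_i^{\top}\rangle\ge\sum_{i,j}\langle A_{ij},\dot S_i\dot S_j^{\top}\rangle$ for all $\dot S_i\in T_{S_i}$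 (negative semidefinite Riemannian Hessian). $d_F(S,Z)=\min\{(\sum_{i}\|S_i-Q\|_F^2)^{1/2}: Q\in\mathbb{R}^{d\times p},QQ^{\top}=I_d\}$. *)

theory Defs
  imports "HOL-Analysis.Analysis"
begin

text \<open>Dimensions are types: 'n indexes the n blocks, 'd has d elements, 'p has p elements.
  Block matrices of size nd x nd are indexed by 'n \<times> 'd.\<close>

definition opnorm :: "real^'c::finite^'r::finite \<Rightarrow> real" where
  "opnorm M = onorm (\<lambda>x. M *v x)"

definition frob_inner :: "real^'c::finite^'r::finite \<Rightarrow> real^'c^'r \<Rightarrow> real" where
  "frob_inner X Y = (\<Sum>a\<in>UNIV. \<Sum>b\<in>UNIV. X $ a $ b * Y $ a $ b)"

definition frob_norm :: "real^'c::finite^'r::finite \<Rightarrow> real" where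
  "frob_norm X = sqrt (frob_inner X X)"

definition blockmat :: "('n::finite \<Rightarrow> 'm::finite \<Rightarrow> real^'c::finite^'r::finite) \<Rightarrow> real^('m \<times> 'c)^('n \<times> 'r)" where
  "blockmat B = (\<chi> r c. B (fst r) (fst c) $ snd r $ snd c)"

text \<open>The i-th block row transposed, Delta_i^T = [Delta_i1, ..., Delta_in] (d x nd).\<close>
definition block_rowT :: "('n::finite \<Rightarrow> 'n \<Rightarrow> real^'d::finite^'d) \<Rightarrow> 'n \<Rightarrow> real^('n \<times> 'd)^'d" where
  "block_rowT D i = (\<chi> a c. D i (fst c) $ a $ snd c)"

definition block_row :: "('n::finite \<Rightarrow> 'n \<Rightarrow> real^'d::finite^'d) \<Rightarrow> 'n \<Rightarrow> real^'d^('n \<times> 'd)" where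
  "block_row D i = transpose (block_rowT D i)"

text \<open>Z^T = [I_d, ..., I_d]; Z is nd x d.\<close>
definition Zmat :: "real^'d::finite^('n::finite \<times> 'd)" where
  "Zmat = (\<chi> r a. if a = snd r then 1 else 0)"

definition Amat :: "('n::finite \<Rightarrow> 'n \<Rightarrow> real^'d::finite^'d) \<Rightarrow> 'n \<Rightarrow> 'n \<Rightarrow> real^'d^'d" where
  "Amat D i j = mat 1 + D i j"

definition stiefel :: "real^'p::finite^'d::finite \<Rightarrow> bool" where
  "stiefel Y \<longleftrightarrow> Y ** transpose Y = mat 1"

definition fobj :: "('n::finite \<Rightarrow> 'n \<Rightarrow> real^'d::finite^'d) \<Rightarrow> ('n \<Rightarrow> real^'p::finite^'d) \<Rightarrow> real" where
  "fobj D S = (\<Sum>i\<in>UNIV. \<Sum>j\<in>UNIV. frob_inner (Amat D i j) (S i ** transpose (S j)))"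

definition Lambda :: "('n::finite \<Rightarrow> 'n \<Rightarrow> real^'d::finite^'d) \<Rightarrow> ('n \<Rightarrow> real^'p::finite^'d) \<Rightarrow> 'n \<Rightarrow> real^'d^'d" where
  "Lambda D S i = (1/2) *\<^sub>R (\<Sum>j\<in>UNIV. S i ** transpose (S j) ** Amat D j i
                                      + Amat D i j ** S j ** transpose (S i))"

definition tangent :: "real^'p::finite^'d::finite \<Rightarrow> (real^'p^'d) set" where
  "tangent Si = {Y. Si ** transpose Y + Y ** transpose Si = 0}"

definition second_order_critical ::
  "('n::finite \<Rightarrow> 'n \<Rightarrow> real^'d::finite^'d) \<Rightarrow> ('n \<Rightarrow> real^'p::finite^'d) \<Rightarrow> bool" where
  "second_order_critical D S \<longleftrightarrow>
     (\<forall>i. (\<Sum>j\<in>UNIV. Amat D i j ** S j) = Lambda D S i ** S i) \<and>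
     (\<forall>Sd. (\<forall>i. Sd i \<in> tangent (S i)) \<longrightarrow>
        (\<Sum>i\<in>UNIV. frob_inner (Lambda D S i) (Sd i ** transpose (Sd i)))
          \<ge> (\<Sum>i\<in>UNIV. \<Sum>j\<in>UNIV. frob_inner (Amat D i j) (Sd i ** transpose (Sd j))))"

text \<open>d_F(S,Z) = min over Q in St(d,p) (the infimum is attained by compactness).\<close>
definition dF :: "('n::finite \<Rightarrow> real^'p::finite^'d::finite) \<Rightarrow> real" where
  "dF S = Inf {sqrt (\<Sum>i\<in>UNIV. (frob_norm (S i - Q))\<^sup>2) | Q. stiefel Q}"

definition psd :: "real^'k::finite^'k \<Rightarrow> bool" where
  "psd X \<longleftrightarrow> transpose X = X \<and> (\<forall>v. 0 \<le> v \<bullet> (X *v v))"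

definition sdp_feasible :: "real^('n::finite \<times> 'd::finite)^('n \<times> 'd) \<Rightarrow> bool" where
  "sdp_feasible X \<longleftrightarrow> psd X \<and>
     (\<forall>i a b. X $ (i,a) $ (i,b) = (if a = b then 1 else 0))"

definition orthogonal_mat :: "real^'d::finite^'d \<Rightarrow> bool" where
  "orthogonal_mat R \<longleftrightarrow> R ** transpose R = mat 1"

definition Pobj :: "('n::finite \<Rightarrow> 'n \<Rightarrow> real^'d::finite^'d) \<Rightarrow> ('n \<Rightarrow> real^'d^'d) \<Rightarrow> real" where
  "Pobj D R = (\<Sum>i\<in>UNIV. \<Sum>j\<in>UNIV. frob_inner (R i ** transpose (R j)) (Amat D i j))"

end

theory Submission
  imports Defs
begin

text \<open>
  At a second-order critical point the multipliers satisfy \<open>\<Lambda>\<^sub>i\<^sub>i S\<^sub>i = \<Sum>\<^sub>j A\<^sub>i\<^sub>j S\<^sub>j\<close>, and the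
  second-order condition, tested along \<open>a x\<^sup>T\<close> with \<open>S\<^sub>i x = 0\<close> (possible as \<open>p > d\<close>), gives
  \<open>\<Lambda>\<^sub>i\<^sub>i \<ge> I\<close>. Hence the smallest eigenvalue of \<open>\<Lambda>\<^sub>i\<^sub>i\<close> is \<open>\<parallel>(\<Sum>\<^sub>j S\<^sub>j + \<Sum>\<^sub>j \<Delta>\<^sub>i\<^sub>j S\<^sub>j)\<^sup>T x\<parallel>\<close>
  for a unit eigenvector \<open>x\<close>, which is at least \<open>n - \<Sum>\<^sub>j \<parallel>S\<^sub>j - Q\<parallel>\<^sup>2/2 - \<parallel>\<Sum>\<^sub>j \<Delta>\<^sub>i\<^sub>j S\<^sub>j\<parallel>\<close> for
  every \<open>Q \<in> St(d,p)\<close>. Under the gap condition the dual certificate \<open>C = diag(\<Lambda>\<^sub>i\<^sub>i) - A\<close> is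
  therefore positive semidefinite, and its kernel, which contains the columns of \<open>S\<close>, meets the
  orthogonal complement of the columns of \<open>Z\<close> trivially; so \<open>ker C\<close> is exactly the
  \<open>d\<close>-dimensional column space of \<open>S\<close>. As \<open>\<langle>A, Y\<rangle> = \<Sum>\<^sub>i tr \<Lambda>\<^sub>i\<^sub>i - \<langle>C, Y\<rangle>\<close> for every
  SDP-feasible \<open>Y\<close>, the matrix \<open>S S\<^sup>T\<close> is optimal, and any optimal \<open>Y = \<Sum> v v\<^sup>T\<close> has all
  \<open>v \<in> ker C\<close>, which forces \<open>Y = S S\<^sup>T\<close>. The bound on \<open>\<parallel>\<Sum>\<^sub>j\<^sub>\<noteq>\<^sub>i \<Delta>\<^sub>i\<^sub>j S\<^sub>j\<parallel>\<close> comes from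
  writing \<open>S = Z Q + (S - Z Q)\<close>.
\<close>

section \<open>Matrix algebra, operator and Frobenius norms\<close>

lemma matrix_add_rdistrib: "(A + B) ** C = A ** C + B ** C"
  for A B :: "'a::semiring_1^'c::finite^'r" and C :: "'a^'k^'c"
  by (simp add: vec_eq_iff matrix_matrix_mult_def sum.distrib distrib_right)

lemma matrix_mul_rzero [simp]: "(A :: 'a::semiring_1^'c::finite^'r) ** (0 :: 'a^'k^'c) = 0"
  by (simp add: vec_eq_iff matrix_matrix_mult_def)

lemma matrix_mul_lzero [simp]: "(0 :: 'a^'c^'r) ** A = 0"
  for A :: "'a::semiring_1^'k^'c::finite"
  by (simp add: vec_eq_iff matrix_matrix_mult_def)

lemma transpose_add: "transpose (A + B) = transpose A + transpose B"
  for A B :: "'a::plus^'c^'r"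
  by (simp add: vec_eq_iff transpose_def)

lemma transpose_diff: "transpose (A - B) = transpose A - transpose B"
  for A B :: "'a::minus^'c^'r"
  by (simp add: vec_eq_iff transpose_def)

lemma transpose_zero [simp]: "transpose (0 :: 'a::zero^'c^'r) = 0"
  by (simp add: vec_eq_iff transpose_def)

lemma transpose_sum: "transpose (\<Sum>j\<in>A. f j) = (\<Sum>j\<in>A. transpose (f j))"
  for f :: "'i \<Rightarrow> 'a::comm_monoid_add^'c^'r"
  by (induction A rule: infinite_finite_induct) (simp_all add: transpose_add)

lemma sum_matrix_vector_mult: "(\<Sum>j\<in>A. f j) *v x = (\<Sum>j\<in>A. f j *v x)"
  for f :: "'i \<Rightarrow> 'a::semiring_1^'c::finite^'r"
  by (induction A rule: infinite_finite_induct) (simp_all add: matrix_vector_mult_add_rdistrib)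

lemma matrix_vector_mult_sum: "A *v (\<Sum>i\<in>I. f i) = (\<Sum>i\<in>I. A *v f i)"
  for A :: "'a::semiring_1^'c::finite^'r"
  by (induction I rule: infinite_finite_induct) (simp_all add: matrix_vector_right_distrib)

lemma transpose_mv_inner: "(transpose M *v x) \<bullet> y = x \<bullet> (M *v y)"
  for M :: "real^'c::finite^'r::finite"
  unfolding transpose_matrix_vector by (rule dot_lmul_matrix)

lemma symmetric_form_swap:
  fixes P :: "real^'k::finite^'k"
  assumes "transpose P = P"
  shows "a \<bullet> (P *v b) = b \<bullet> (P *v a)"
proof -
  have "b \<bullet> (P *v a) = (transpose P *v b) \<bullet> a" by (rule transpose_mv_inner[symmetric])
  then show ?thesis by (simp only: assms inner_commute)
qed

lemma range_mv_subspace: "subspace (range (\<lambda>x. A *v x))"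
  for A :: "real^'c::finite^'r::finite"
proof -
  have "subspace ((\<lambda>x. A *v x) ` UNIV)"
    by (rule linear_subspace_image) (simp_all add: subspace_UNIV)
  then show ?thesis by simp
qed

lemma kernel_subspace: "subspace {v. Y *v v = 0}"
  for Y :: "real^'c::finite^'r::finite"
  unfolding subspace_def by (simp add: matrix_vector_right_distrib matrix_vector_mult_scaleR)

lemma norm_mv_le_opnorm: "norm (M *v x) \<le> opnorm M * norm x"
  unfolding opnorm_def by (rule onorm) simp

lemma opnorm_le:
  fixes M :: "real^'c::finite^'r::finite"
  assumes "\<And>x. norm (M *v x) \<le> b * norm x"
  shows "opnorm M \<le> b"
  unfolding opnorm_def by (rule onorm_le) (use assms in auto)

lemma opnorm_nonneg: "0 \<le> opnorm M"
  unfolding opnorm_def by (rule onorm_pos_le) simp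

lemma opnorm_eq_0: "opnorm M = 0 \<longleftrightarrow> M = 0"
proof
  assume "opnorm M = 0"
  then have "\<forall>x. M *v x = 0"
    unfolding opnorm_def by (subst (asm) onorm_eq_0) simp_all
  then show "M = 0" by (simp add: matrix_eq)
next
  assume "M = 0"
  then show "opnorm M = 0"
    using opnorm_le[of M 0] opnorm_nonneg[of M] by simp
qed

lemma opnorm_zero [simp]: "opnorm 0 = 0"
  by (simp add: opnorm_eq_0)

lemma opnorm_matrix_mul_le: "opnorm (A ** B) \<le> opnorm A * opnorm B"
  for A :: "real^'n::finite^'m::finite" and B :: "real^'k::finite^'n"
proof (rule opnorm_le)
  fix x
  have "norm ((A ** B) *v x) = norm (A *v (B *v x))" by (simp add: matrix_vector_mul_assoc)
  also have "\<dots> \<le> opnorm A * norm (B *v x)" by (rule norm_mv_le_opnorm)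
  also have "\<dots> \<le> opnorm A * (opnorm B * norm x)"
    by (rule mult_left_mono[OF norm_mv_le_opnorm opnorm_nonneg])
  finally show "norm ((A ** B) *v x) \<le> opnorm A * opnorm B * norm x" by simp
qed

lemma opnorm_add_le: "opnorm (A + B) \<le> opnorm A + opnorm B"
  for A B :: "real^'c::finite^'r::finite"
proof (rule opnorm_le)
  fix x
  have "norm ((A + B) *v x) \<le> norm (A *v x) + norm (B *v x)"
    by (simp add: matrix_vector_mult_add_rdistrib norm_triangle_ineq)
  also have "\<dots> \<le> opnorm A * norm x + opnorm B * norm x"
    by (intro add_mono norm_mv_le_opnorm)
  finally show "norm ((A + B) *v x) \<le> (opnorm A + opnorm B) * norm x" by (simp add: algebra_simps)
qed

lemma norm_transpose_mv_le_opnorm: "norm (transpose M *v x) \<le> opnorm M * norm x"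
proof -
  let ?y = "transpose M *v x"
  have "(norm ?y)^2 = ?y \<bullet> ?y" by (simp add: power2_norm_eq_inner)
  also have "\<dots> = x \<bullet> (M *v ?y)" by (rule transpose_mv_inner)
  also have "\<dots> \<le> norm x * norm (M *v ?y)" by (rule norm_cauchy_schwarz)
  also have "\<dots> \<le> norm x * (opnorm M * norm ?y)" by (rule mult_left_mono[OF norm_mv_le_opnorm]) simp
  finally have h: "(norm ?y)^2 \<le> (opnorm M * norm x) * norm ?y" by (simp add: algebra_simps)
  show ?thesis
  proof (cases "norm ?y = 0")
    case True then show ?thesis using opnorm_nonneg[of M] by simp
  next
    case False
    then have p: "norm ?y > 0" by simp
    have "norm ?y * norm ?y \<le> (opnorm M * norm x) * norm ?y" using h by (simp only: power2_eq_square)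
    then show ?thesis using p by (rule mult_right_le_imp_le)
  qed
qed

lemma opnorm_transpose: "opnorm (transpose M) = opnorm M"
proof (rule antisym)
  show "opnorm (transpose M) \<le> opnorm M"
    by (rule opnorm_le) (rule norm_transpose_mv_le_opnorm)
  show "opnorm M \<le> opnorm (transpose M)"
    by (rule opnorm_le) (use norm_transpose_mv_le_opnorm[of "transpose M"] in simp)
qed


lemma power2_norm_vec: "(norm v)\<^sup>2 = (\<Sum>i\<in>UNIV. v $ i * v $ i)"
  for v :: "real^'n::finite"
  unfolding power2_norm_eq_inner inner_vec_def by simp

lemma frob_inner_self: "frob_inner M M = (\<Sum>a\<in>UNIV. (norm (M $ a))\<^sup>2)"
  unfolding frob_inner_def power2_norm_vec by simp

lemma frob_inner_self_nonneg: "0 \<le> frob_inner M M"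
  unfolding frob_inner_self by (rule sum_nonneg) simp

lemma frob_norm_power2: "(frob_norm M)\<^sup>2 = frob_inner M M"
  unfolding frob_norm_def using frob_inner_self_nonneg by simp

lemma frob_norm_nonneg: "0 \<le> frob_norm M"
  unfolding frob_norm_def using frob_inner_self_nonneg by simp

lemma frob_norm_minus_commute: "frob_norm (A - B) = frob_norm (B - A)"
  unfolding frob_norm_def frob_inner_def by (simp add: algebra_simps)

lemma frob_inner_commute: "frob_inner A B = frob_inner B A"
  unfolding frob_inner_def by (simp add: mult.commute)

lemma frob_inner_add_right: "frob_inner C (A + B) = frob_inner C A + frob_inner C B"
  unfolding frob_inner_def by (simp add: distrib_left sum.distrib)

lemma frob_inner_scaleR_right: "frob_inner C (c *\<^sub>R M) = c * frob_inner C M"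
  unfolding frob_inner_def by (simp add: sum_distrib_left mult_ac)

lemma frob_inner_diff_left: "frob_inner (A - B) Y = frob_inner A Y - frob_inner B Y"
  unfolding frob_inner_def by (simp add: left_diff_distrib sum_subtractf)

lemma frob_inner_zero_left [simp]: "frob_inner 0 Y = 0"
  unfolding frob_inner_def by simp

lemma frob_inner_zero_right [simp]: "frob_inner C 0 = 0"
  unfolding frob_inner_def by simp

lemma frob_inner_mul_transpose: "frob_inner C (G ** transpose G) = frob_inner G (C ** G)"
  unfolding frob_inner_def
  by (simp add: matrix_matrix_mult_def transpose_def sum_distrib_left mult_ac)
     (rule sum.cong[OF refl], rule sum.swap)

lemma opnorm_le_frob_norm: "opnorm M \<le> frob_norm M"
proof (rule opnorm_le)
  fix x
  have "(norm (M *v x))\<^sup>2 = (\<Sum>a\<in>UNIV. (M $ a \<bullet> x)\<^sup>2)"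
    unfolding power2_norm_vec by (simp add: matrix_mult_dot power2_eq_square)
  also have "\<dots> \<le> (\<Sum>a\<in>UNIV. (norm (M $ a))\<^sup>2 * (norm x)\<^sup>2)"
  proof (rule sum_mono)
    fix a
    have "\<bar>M $ a \<bullet> x\<bar> \<le> norm (M $ a) * norm x" by (rule Cauchy_Schwarz_ineq2)
    then have "\<bar>M $ a \<bullet> x\<bar>\<^sup>2 \<le> (norm (M $ a) * norm x)\<^sup>2" by (rule power_mono) simp
    then show "(M $ a \<bullet> x)\<^sup>2 \<le> (norm (M $ a))\<^sup>2 * (norm x)\<^sup>2" by (simp add: power_mult_distrib)
  qed
  also have "\<dots> = (frob_norm M * norm x)\<^sup>2"
    by (simp add: power_mult_distrib frob_norm_power2 frob_inner_self sum_distrib_right)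
  finally show "norm (M *v x) \<le> frob_norm M * norm x"
    by (rule power2_le_imp_le) (simp add: frob_norm_nonneg)
qed

lemma stiefel_norm_transpose_mv:
  assumes "stiefel Q"
  shows "norm (transpose Q *v x) = norm x"
proof -
  have "(norm (transpose Q *v x))\<^sup>2 = x \<bullet> (Q *v (transpose Q *v x))"
    unfolding power2_norm_eq_inner by (rule transpose_mv_inner)
  also have "\<dots> = x \<bullet> x"
    using assms by (metis stiefel_def matrix_vector_mul_assoc matrix_vector_mul_lid)
  finally show ?thesis by (simp add: norm_eq_sqrt_inner power2_norm_eq_inner)
qed

lemma stiefel_opnorm_le_1:
  assumes "stiefel Q"
  shows "opnorm Q \<le> 1"
proof -
  have "opnorm (transpose Q) \<le> 1"
    by (rule opnorm_le) (simp only: stiefel_norm_transpose_mv[OF assms] mult_1 order_refl)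
  then show ?thesis by (simp add: opnorm_transpose)
qed

lemma rank_scaleR_mat_1:
  assumes "c \<noteq> 0"
  shows "rank (c *\<^sub>R mat 1 :: real^'n::finite^'n) = CARD('n)"
proof -
  have "inj ((*v) (c *\<^sub>R mat 1 :: real^'n^'n))"
    using assms by (intro injI) (simp add: scaleR_matrix_vector_assoc[symmetric])
  then show ?thesis by (simp add: full_rank_injective)
qed

section \<open>Symmetric positive semidefinite matrices\<close>

lemma psd_form_zero_imp_kernel:
  assumes "psd P" and zero: "v \<bullet> (P *v v) = 0"
  shows "P *v v = 0"
proof (rule ccontr)
  have sym: "transpose P = P" and pos: "\<And>v. 0 \<le> v \<bullet> (P *v v)"
    using \<open>psd P\<close> unfolding psd_def by auto
  assume "P *v v \<noteq> 0"
  define w where "w = P *v v"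
  define c where "c = w \<bullet> (P *v w)"
  define t where "t = (w \<bullet> w) / (c + 1)"
  have c0: "0 \<le> c" unfolding c_def by (rule pos)
  have ww: "0 < w \<bullet> w" using \<open>P *v v \<noteq> 0\<close> unfolding w_def by simp
  have t0: "0 < t" unfolding t_def using ww c0 by simp
  have vPw: "v \<bullet> (P *v w) = w \<bullet> w"
    using symmetric_form_swap[OF sym, of v w] unfolding w_def by simp
  have vw: "v \<bullet> w = 0" using zero unfolding w_def .
  \<comment> \<open>moving from \<open>v\<close> against \<open>P v\<close> makes the form negative\<close>
  have "(v - t *\<^sub>R w) \<bullet> (P *v (v - t *\<^sub>R w)) = (v - t *\<^sub>R w) \<bullet> (w - t *\<^sub>R (P *v w))"
    unfolding w_def by (simp only: matrix_vector_mult_diff_distrib matrix_vector_mult_scaleR)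
  also have "\<dots> = v \<bullet> w - t * (v \<bullet> (P *v w)) - t * (w \<bullet> w) + t * t * (w \<bullet> (P *v w))"
    by (simp only: inner_diff_left inner_diff_right inner_scaleR_left inner_scaleR_right
        inner_commute[of w v]) (simp add: algebra_simps)
  also have "\<dots> = t * (t * c - 2 * (w \<bullet> w))"
    unfolding vPw vw c_def by (simp add: algebra_simps)
  also have "\<dots> < 0"
  proof -
    have "t * c < w \<bullet> w" unfolding t_def using ww c0 by (simp add: field_simps)
    then have "t * c - 2 * (w \<bullet> w) < 0" using ww by linarith
    then show ?thesis using t0 by (simp add: mult_pos_neg)
  qed
  finally show False using pos[of "v - t *\<^sub>R w"] by linarith
qed

lemma symmetric_min_eigenvector:
  fixes L :: "real^'k::finite^'k"
  assumes sym: "transpose L = L"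
  obtains x \<mu> where "norm x = 1" "L *v x = \<mu> *\<^sub>R x" "\<And>y. \<mu> * (y \<bullet> y) \<le> y \<bullet> (L *v y)"
proof -
  have cont: "continuous_on (sphere 0 1) (\<lambda>y. y \<bullet> (L *v y))"
    by (intro continuous_intros linear_continuous_on) simp
  have "axis undefined 1 \<in> sphere (0::real^'k) 1" by simp
  then obtain x where x: "x \<in> sphere 0 1"
    and x_min: "\<And>y. y \<in> sphere 0 1 \<Longrightarrow> x \<bullet> (L *v x) \<le> y \<bullet> (L *v y)"
    using continuous_attains_inf[OF compact_sphere _ cont] by blast
  define \<mu> where "\<mu> = x \<bullet> (L *v x)"
  have nx: "norm x = 1" using x by simp
  have Rayleigh: "\<mu> * (y \<bullet> y) \<le> y \<bullet> (L *v y)" for y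
  proof (cases "y = 0")
    case False
    let ?c = "1 / norm y"
    have "\<mu> \<le> (?c *\<^sub>R y) \<bullet> (L *v (?c *\<^sub>R y))"
      unfolding \<mu>_def using False by (intro x_min) simp
    then have "\<mu> * (norm y * norm y) \<le> y \<bullet> (L *v y)"
      using False by (simp add: matrix_vector_mult_scaleR field_simps)
    then show ?thesis by (simp add: power2_norm_eq_inner[symmetric] power2_eq_square)
  qed simp
  define P where "P = L - \<mu> *\<^sub>R mat 1"
  have Pv: "P *v y = L *v y - \<mu> *\<^sub>R y" for y
    unfolding P_def by (simp add: matrix_vector_mult_diff_rdistrib scaleR_matrix_vector_assoc[symmetric])
  have "psd P"
    unfolding psd_def Pv using Rayleigh
    by (simp add: P_def transpose_diff transpose_scalar sym inner_diff_right)
  moreover have "x \<bullet> (P *v x) = 0"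
    unfolding Pv using nx by (simp add: inner_diff_right \<mu>_def power2_norm_eq_inner[symmetric])
  ultimately have "P *v x = 0" by (rule psd_form_zero_imp_kernel)
  then have "L *v x = \<mu> *\<^sub>R x" unfolding Pv by simp
  then show ?thesis using that nx Rayleigh by blast
qed

lemma symmetric_max_eigenvector:
  fixes L :: "real^'k::finite^'k"
  assumes sym: "transpose L = L"
  obtains x \<mu> where "norm x = 1" "L *v x = \<mu> *\<^sub>R x" "\<And>y. y \<bullet> (L *v y) \<le> \<mu> * (y \<bullet> y)"
proof -
  have neg_mv: "(- L) *v y = - (L *v y)" for y
    by (simp add: matrix_vector_mult_def vec_eq_iff sum_negf)
  have sym_neg: "transpose (- L) = - L"
    using sym by (simp add: vec_eq_iff transpose_def)
  obtain x \<mu> where nx: "norm x = 1" and ev: "(- L) *v x = \<mu> *\<^sub>R x"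
    and min: "\<And>y. \<mu> * (y \<bullet> y) \<le> y \<bullet> ((- L) *v y)"
    using symmetric_min_eigenvector[OF sym_neg] by blast
  show ?thesis
  proof (rule that[of x "- \<mu>"])
    show "norm x = 1" by (fact nx)
    show "L *v x = (- \<mu>) *\<^sub>R x" using ev unfolding neg_mv by (metis minus_minus scaleR_minus_left)
    show "y \<bullet> (L *v y) \<le> (- \<mu>) * (y \<bullet> y)" for y using min[of y] unfolding neg_mv by simp
  qed
qed

definition outer :: "real^'a::finite \<Rightarrow> real^'b::finite \<Rightarrow> real^'b^'a" where
  "outer v w = (\<chi> a b. v $ a * w $ b)"

lemma outer_mv: "outer v w *v y = (w \<bullet> y) *\<^sub>R v"
  unfolding outer_def
  by (simp add: matrix_vector_mult_def inner_vec_def vec_eq_iff sum_distrib_left mult_ac)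

lemma transpose_outer: "transpose (outer v w) = outer w v"
  unfolding outer_def by (simp add: vec_eq_iff transpose_def mult.commute)

lemma outer_scaleR: "outer (c *\<^sub>R v) (c *\<^sub>R v) = (c * c) *\<^sub>R outer v v"
  unfolding outer_def by (simp add: vec_eq_iff)

lemma frob_inner_outer: "frob_inner C (outer v v) = v \<bullet> (C *v v)"
  unfolding frob_inner_def outer_def
  by (simp add: matrix_vector_mult_def inner_vec_def sum_distrib_left mult_ac)

lemma frob_inner_sum_outer:
  "frob_inner C (sum_list (map (\<lambda>v. outer v v) vs)) = sum_list (map (\<lambda>v. v \<bullet> (C *v v)) vs)"
  by (induction vs) (simp_all add: frob_inner_add_right frob_inner_outer)

lemma psd_deflate:
  assumes "psd Y" and xx: "x \<bullet> x = 1" and ev: "Y *v x = \<mu> *\<^sub>R x"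
  shows "psd (Y - \<mu> *\<^sub>R outer x x)"
  unfolding psd_def
proof (intro conjI allI)
  have sym: "transpose Y = Y" and pos: "\<And>v. 0 \<le> v \<bullet> (Y *v v)"
    using \<open>psd Y\<close> unfolding psd_def by auto
  show "transpose (Y - \<mu> *\<^sub>R outer x x) = Y - \<mu> *\<^sub>R outer x x"
    by (simp add: transpose_diff transpose_scalar transpose_outer sym)
  fix y
  define c where "c = x \<bullet> y"
  define z where "z = y - c *\<^sub>R x"
  have "x \<bullet> z = 0" unfolding z_def using xx by (simp add: inner_diff_right c_def)
  then have zx: "z \<bullet> (Y *v x) = 0" unfolding ev by (simp add: inner_commute)
  then have xz: "x \<bullet> (Y *v z) = 0" using symmetric_form_swap[OF sym, of x z] by simp
  have "y \<bullet> (Y *v y) = c * c * (x \<bullet> (Y *v x)) + c * (x \<bullet> (Y *v z)) + c * (z \<bullet> (Y *v x)) + z \<bullet> (Y *v z)"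
    unfolding z_def
    by (simp add: matrix_vector_right_distrib matrix_vector_mult_scaleR inner_add_left inner_add_right
        inner_diff_left inner_diff_right algebra_simps)
  also have "\<dots> = c * c * \<mu> + z \<bullet> (Y *v z)"
    using xz zx ev xx by simp
  finally have "y \<bullet> (Y *v y) = c * c * \<mu> + z \<bullet> (Y *v z)" .
  then show "0 \<le> y \<bullet> ((Y - \<mu> *\<^sub>R outer x x) *v y)"
    using pos[of z]
    by (simp add: matrix_vector_mult_diff_rdistrib scaleR_matrix_vector_assoc[symmetric] outer_mv
        inner_diff_right c_def inner_commute[of y x] algebra_simps)
qed

lemma dim_kernel_deflate:
  fixes Y :: "real^'k::finite^'k"
  assumes sym: "transpose Y = Y" and xx: "x \<bullet> x = 1" and ev: "Y *v x = \<mu> *\<^sub>R x" and "\<mu> \<noteq> 0"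
  shows "dim {v. Y *v v = 0} < dim {v. (Y - \<mu> *\<^sub>R outer x x) *v v = 0}"
proof -
  let ?K = "{v. Y *v v = 0}" and ?K' = "{v. (Y - \<mu> *\<^sub>R outer x x) *v v = 0}"
  have Y'v: "(Y - \<mu> *\<^sub>R outer x x) *v v = Y *v v - (\<mu> * (x \<bullet> v)) *\<^sub>R x" for v
    by (simp add: matrix_vector_mult_diff_rdistrib scaleR_matrix_vector_assoc[symmetric] outer_mv)
  have "x \<noteq> 0" using xx by auto
  then have xK: "x \<notin> span ?K"
    using ev \<open>\<mu> \<noteq> 0\<close> by (simp add: span_eq_iff[THEN iffD2, OF kernel_subspace])
  have "insert x ?K \<subseteq> ?K'"
  proof
    fix v assume "v \<in> insert x ?K"
    then show "v \<in> ?K'"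
    proof
      assume "v = x" then show ?thesis using ev xx by (simp add: Y'v)
    next
      assume vK: "v \<in> ?K"
      have "\<mu> * (x \<bullet> v) = v \<bullet> (Y *v x)" unfolding ev by (simp add: inner_commute)
      also have "\<dots> = 0" using vK symmetric_form_swap[OF sym, of v x] by simp
      finally have "x \<bullet> v = 0" using \<open>\<mu> \<noteq> 0\<close> by simp
      then show ?thesis using vK by (simp add: Y'v)
    qed
  qed
  then have "dim (insert x ?K) \<le> dim ?K'" by (rule dim_subset)
  then show ?thesis using xK by (simp add: dim_insert)
qed

lemma psd_sum_outer:
  fixes Y :: "real^'k::finite^'k"
  assumes "psd Y"
  obtains vs where "Y = sum_list (map (\<lambda>v. outer v v) vs)"
proof -
  have "\<exists>vs. Y = sum_list (map (\<lambda>v. outer v v) vs)"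
    using assms
  proof (induction "CARD('k) - dim {v. Y *v v = 0}" arbitrary: Y rule: less_induct)
    case less
    have sym: "transpose Y = Y" and pos: "\<And>v. 0 \<le> v \<bullet> (Y *v v)"
      using \<open>psd Y\<close> unfolding psd_def by auto
    show ?case
    proof (cases "Y = 0")
      case True
      then show ?thesis by (intro exI[of _ "[]"]) simp
    next
      case False
      obtain x \<mu> where nx: "norm x = 1" and ev: "Y *v x = \<mu> *\<^sub>R x"
        and max: "\<And>y. y \<bullet> (Y *v y) \<le> \<mu> * (y \<bullet> y)"
        using symmetric_max_eigenvector[OF sym] by blast
      have xx: "x \<bullet> x = 1" using nx by (simp add: power2_norm_eq_inner[symmetric])
      have "0 < \<mu>"
      proof (rule ccontr)
        assume "\<not> 0 < \<mu>"
        then have "y \<bullet> (Y *v y) = 0" for y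
          using max[of y] pos[of y] inner_ge_zero[of y] by (smt (verit) mult_nonpos_nonneg)
        then have "Y *v y = 0" for y using psd_form_zero_imp_kernel[OF \<open>psd Y\<close>] by blast
        then show False using False by (simp add: matrix_eq)
      qed
      define Y' where "Y' = Y - \<mu> *\<^sub>R outer x x"
      have "psd Y'"
        unfolding Y'_def by (rule psd_deflate[OF \<open>psd Y\<close> xx ev])
      have "dim {v. Y *v v = 0} < dim {v. Y' *v v = 0}"
        unfolding Y'_def using \<open>0 < \<mu>\<close> by (intro dim_kernel_deflate[OF sym xx ev]) simp
      moreover have "dim {v. Y' *v v = 0} \<le> CARD('k)" by (rule dim_subset_UNIV_cart)
      ultimately obtain vs where vs: "Y' = sum_list (map (\<lambda>v. outer v v) vs)"
        using less.hyps[OF _ \<open>psd Y'\<close>] by (meson diff_less_mono2 order_less_le_trans)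
      have "Y = outer (sqrt \<mu> *\<^sub>R x) (sqrt \<mu> *\<^sub>R x) + Y'"
        unfolding outer_scaleR Y'_def using \<open>0 < \<mu>\<close> by (simp add: real_sqrt_mult_self)
      then show ?thesis using vs by (intro exI[of _ "sqrt \<mu> *\<^sub>R x # vs"]) simp
    qed
  qed
  then show ?thesis using that by blast
qed

section \<open>Block vectors and block matrices\<close>

definition vec_block :: "real^('n::finite \<times> 'd::finite) \<Rightarrow> 'n \<Rightarrow> real^'d" where
  "vec_block u i = (\<chi> a. u $ (i, a))"

definition block_col :: "('n::finite \<Rightarrow> real^'p::finite^'d::finite) \<Rightarrow> real^'p^('n \<times> 'd)" where
  "block_col S = (\<chi> r. S (fst r) $ snd r)"

definition mat_block ::
  "real^('m::finite \<times> 'c::finite)^('n::finite \<times> 'r::finite) \<Rightarrow> 'n \<Rightarrow> 'm \<Rightarrow> real^'c^'r" where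
  "mat_block Y i j = (\<chi> a b. Y $ (i, a) $ (j, b))"

lemma sum_UNIV_prod: "(\<Sum>r\<in>UNIV. f r) = (\<Sum>i\<in>UNIV. \<Sum>a\<in>UNIV. f (i, a))"
  for f :: "('a::finite \<times> 'b::finite) \<Rightarrow> 'c::comm_monoid_add"
  by (simp add: sum.cartesian_product UNIV_Times_UNIV[symmetric] del: UNIV_Times_UNIV)

lemma vec_block_eq_iff: "u = v \<longleftrightarrow> (\<forall>i. vec_block u i = vec_block v i)"
  unfolding vec_block_def by (auto simp: vec_eq_iff)

lemma vec_block_zero [simp]: "vec_block 0 i = 0"
  unfolding vec_block_def by (simp add: vec_eq_iff)

lemma inner_vec_block: "u \<bullet> v = (\<Sum>i\<in>UNIV. vec_block u i \<bullet> vec_block v i)"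
  unfolding inner_vec_def vec_block_def by simp (rule sum_UNIV_prod)

lemma blockmat_mv: "vec_block (blockmat B *v u) i = (\<Sum>j\<in>UNIV. B i j *v vec_block u j)"
  unfolding vec_block_def blockmat_def
  by (simp add: vec_eq_iff matrix_vector_mult_def sum_UNIV_prod[of "\<lambda>r. _ r * u $ r"])

lemma block_col_mv: "vec_block (block_col S *v x) i = S i *v x"
  unfolding vec_block_def block_col_def by (simp add: vec_eq_iff matrix_vector_mult_def)

lemma transpose_block_col_mv:
  "transpose (block_col S) *v u = (\<Sum>i\<in>UNIV. transpose (S i) *v vec_block u i)"
  unfolding vec_block_def block_col_def
  by (simp add: vec_eq_iff vector_matrix_mult_def sum_UNIV_prod[of "\<lambda>r. u $ r * _ r"])

lemma block_col_mul_transpose: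
  "block_col S ** transpose (block_col T) = blockmat (\<lambda>i j. S i ** transpose (T j))"
  by (simp add: vec_eq_iff matrix_matrix_mult_def transpose_def blockmat_def block_col_def)

lemma transpose_block_col_mul: "transpose (block_col R) ** block_col R = (\<Sum>i\<in>UNIV. transpose (R i) ** R i)"
  by (simp add: vec_eq_iff matrix_matrix_mult_def transpose_def block_col_def
      sum_UNIV_prod[of "\<lambda>r. _ r * _ r"])

lemma block_col_mul: "block_col S ** M = block_col (\<lambda>i. S i ** M)"
  by (simp add: vec_eq_iff matrix_matrix_mult_def block_col_def)

lemma block_col_diff: "block_col S - block_col T = block_col (\<lambda>i. S i - T i)"
  by (simp add: vec_eq_iff block_col_def)

lemma frob_inner_block_col: "frob_inner (block_col S) (block_col S) = (\<Sum>i\<in>UNIV. frob_inner (S i) (S i))"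
  unfolding frob_inner_def block_col_def by (simp add: sum_UNIV_prod[of "\<lambda>r. \<Sum>s\<in>UNIV. _ r s"])

lemma blockmat_add: "blockmat B + blockmat B' = blockmat (\<lambda>i j. B i j + B' i j)"
  by (simp add: vec_eq_iff blockmat_def)

lemma blockmat_diff: "blockmat B - blockmat B' = blockmat (\<lambda>i j. B i j - B' i j)"
  by (simp add: vec_eq_iff blockmat_def)

lemma transpose_blockmat: "transpose (blockmat B) = blockmat (\<lambda>i j. transpose (B j i))"
  by (simp add: vec_eq_iff blockmat_def transpose_def)

lemma frob_inner_blockmat:
  "frob_inner (blockmat B) (blockmat B') = (\<Sum>i\<in>UNIV. \<Sum>j\<in>UNIV. frob_inner (B i j) (B' i j))"
  unfolding frob_inner_def blockmat_def
  by (simp add: sum_UNIV_prod[of "\<lambda>r. \<Sum>s\<in>UNIV. _ r s"] sum_UNIV_prod[of "\<lambda>s. _ s * _ s"])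
     (rule sum.cong[OF refl], rule sum.swap)

lemma blockmat_mat_block [simp]: "blockmat (mat_block Y) = Y"
  by (simp add: blockmat_def mat_block_def vec_eq_iff)

lemma mat_block_blockmat [simp]: "mat_block (blockmat B) i j = B i j"
  by (simp add: blockmat_def mat_block_def vec_eq_iff)

lemma Zmat_block_col: "Zmat = block_col (\<lambda>_. mat 1)"
  by (auto simp: Zmat_def block_col_def mat_def vec_eq_iff)

lemma Zmat_blockmat: "Zmat ** transpose Zmat + blockmat D = blockmat (Amat D)"
  unfolding Zmat_block_col block_col_mul_transpose blockmat_add Amat_def by simp

lemma transpose_Zmat_mv: "transpose Zmat *v u = (\<Sum>i\<in>UNIV. vec_block u i)"
  unfolding Zmat_block_col transpose_block_col_mv by simp

lemma block_rowT_mul_block_col: "block_rowT D i ** block_col S = (\<Sum>j\<in>UNIV. D i j ** S j)"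
  by (simp add: vec_eq_iff matrix_matrix_mult_def block_rowT_def block_col_def
      sum_UNIV_prod[of "\<lambda>c. _ c * _ c"])

lemma outer_mv_mv: "outer (M *v y) (M *v y) = M ** outer y y ** transpose M"
  unfolding outer_def
  by (simp add: vec_eq_iff matrix_matrix_mult_def transpose_def matrix_vector_mult_def
      sum_distrib_left sum_distrib_right mult_ac)

lemma sum_outer_map_mv:
  "sum_list (map (\<lambda>v. outer v v) (map (\<lambda>y. M *v y) ys)) = M ** sum_list (map (\<lambda>y. outer y y) ys) ** transpose M"
  by (induction ys) (simp_all add: outer_mv_mv matrix_add_ldistrib matrix_add_rdistrib)

lemma psd_mul_transpose: "psd (G ** transpose G)"
  for G :: "real^'c::finite^'r::finite"
  unfolding psd_def
proof (intro conjI allI)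
  show "transpose (G ** transpose G) = G ** transpose G" by (simp add: matrix_transpose_mul)
  fix v
  have "v \<bullet> ((G ** transpose G) *v v) = (transpose G *v v) \<bullet> (transpose G *v v)"
    by (simp only: matrix_vector_mul_assoc[symmetric] transpose_mv_inner)
  then show "0 \<le> v \<bullet> ((G ** transpose G) *v v)" by simp
qed

lemma sdp_feasible_blockmat:
  assumes "\<And>i. R i ** transpose (R i) = mat 1"
  shows "sdp_feasible (blockmat (\<lambda>i j. R i ** transpose (R j)))"
  unfolding sdp_feasible_def
proof (intro conjI allI)
  show "psd (blockmat (\<lambda>i j. R i ** transpose (R j)))"
    unfolding block_col_mul_transpose[symmetric] by (rule psd_mul_transpose)
  fix i a b
  show "blockmat (\<lambda>i j. R i ** transpose (R j)) $ (i, a) $ (i, b) = (if a = b then 1 else 0)"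
    unfolding blockmat_def using assms[of i] by (simp add: mat_def)
qed

lemma sdp_feasible_diag_block: "sdp_feasible Y \<Longrightarrow> mat_block Y i i = mat 1"
  unfolding sdp_feasible_def mat_block_def by (simp add: vec_eq_iff mat_def)

section \<open>Second-order critical points\<close>

lemma outer_zero_left [simp]: "outer 0 w = 0"
  unfolding outer_def by (simp add: vec_eq_iff)

lemma outer_zero_right [simp]: "outer v 0 = 0"
  unfolding outer_def by (simp add: vec_eq_iff)

lemma outer_mul_transpose_left: "M ** transpose (outer a x) = outer (M *v x) a"
  unfolding outer_def
  by (simp add: vec_eq_iff matrix_matrix_mult_def transpose_def matrix_vector_mult_def
      sum_distrib_left sum_distrib_right mult_ac)

lemma outer_mul_transpose_right: "outer a x ** transpose M = outer a (M *v x)"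
  unfolding outer_def
  by (simp add: vec_eq_iff matrix_matrix_mult_def transpose_def matrix_vector_mult_def
      sum_distrib_left sum_distrib_right mult_ac)

lemma outer_mul_transpose_outer: "outer a x ** transpose (outer b x) = (x \<bullet> x) *\<^sub>R outer a b"
  unfolding outer_def
  by (simp add: vec_eq_iff matrix_matrix_mult_def transpose_def inner_vec_def
      sum_distrib_left sum_distrib_right mult_ac)

lemma form_le_opnorm: "u \<bullet> (M *v u) \<le> opnorm M * (u \<bullet> u)"
proof -
  have "u \<bullet> (M *v u) \<le> norm u * (opnorm M * norm u)"
    by (rule order_trans[OF norm_cauchy_schwarz mult_left_mono[OF norm_mv_le_opnorm]]) simp
  then show ?thesis by (simp add: power2_norm_eq_inner[symmetric] power2_eq_square mult_ac)
qed

lemma stiefel_inner_transpose_mv_ge: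
  assumes Q: "stiefel Q" and T: "stiefel T" and nx: "norm x = 1"
  shows "1 - (frob_norm (T - Q))\<^sup>2 / 2 \<le> (transpose Q *v x) \<bullet> (transpose T *v x)"
proof -
  let ?a = "transpose Q *v x" and ?b = "transpose T *v x"
  have "?a \<bullet> ?a = 1" "?b \<bullet> ?b = 1"
    using stiefel_norm_transpose_mv[OF Q, of x] stiefel_norm_transpose_mv[OF T, of x] nx
    by (simp_all add: power2_norm_eq_inner[symmetric] del: transpose_matrix_vector)
  then have eq: "(norm (?a - ?b))\<^sup>2 = 2 - 2 * (?a \<bullet> ?b)"
    unfolding power2_norm_eq_inner by (simp add: inner_diff_left inner_diff_right inner_commute)
  have "?a - ?b = transpose (Q - T) *v x"
    by (simp only: transpose_diff matrix_vector_mult_diff_rdistrib)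
  then have "norm (?a - ?b) \<le> opnorm (Q - T)"
    using norm_transpose_mv_le_opnorm[of "Q - T" x] nx by simp
  also have "\<dots> \<le> frob_norm (T - Q)"
    using opnorm_le_frob_norm[of "Q - T"] frob_norm_minus_commute[of Q T] by simp
  finally have "(norm (?a - ?b))\<^sup>2 \<le> (frob_norm (T - Q))\<^sup>2" by (rule power_mono) simp
  then show ?thesis using eq by simp
qed

definition block_dist_sq :: "('n::finite \<Rightarrow> real^'p::finite^'d::finite) \<Rightarrow> real^'p^'d \<Rightarrow> real" where
  "block_dist_sq S Q = (\<Sum>i\<in>UNIV. (frob_norm (S i - Q))\<^sup>2)"

lemma block_dist_sq_nonneg: "0 \<le> block_dist_sq S Q"
  unfolding block_dist_sq_def by (simp add: sum_nonneg)

lemma le_dF: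
  assumes "stiefel (S i)" and "\<And>Q. stiefel Q \<Longrightarrow> t \<le> sqrt (block_dist_sq S Q)"
  shows "t \<le> dF S"
  unfolding dF_def block_dist_sq_def[symmetric]
proof (rule cInf_greatest)
  show "{sqrt (block_dist_sq S Q) | Q. stiefel Q} \<noteq> {}" using assms(1) by blast
qed (use assms(2) in blast)

lemma le_dF_power2:
  assumes "stiefel (S i)" and "\<And>Q. stiefel Q \<Longrightarrow> t \<le> block_dist_sq S Q"
  shows "t \<le> (dF S)\<^sup>2"
proof (cases "t \<le> 0")
  case False
  have "sqrt t \<le> dF S" by (rule le_dF[of S i, OF assms(1)]) (use assms(2) in simp)
  then have "(sqrt t)\<^sup>2 \<le> (dF S)\<^sup>2" using False by (intro power_mono) simp_all
  then show ?thesis using False by simp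
qed (use zero_le_power2 order_trans in blast)

locale stiefel_critical_point =
  fixes D :: "'n::finite \<Rightarrow> 'n \<Rightarrow> real^'d::finite^'d" and S :: "'n \<Rightarrow> real^'p::finite^'d"
  assumes p_gt_d: "CARD('d) < CARD('p)"
    and D_sym: "\<And>i j. D j i = transpose (D i j)"
    and D_diag: "\<And>i. D i i = 0"
    and S_stiefel: "\<And>i. stiefel (S i)"
    and crit: "second_order_critical D S"
begin

definition "S_sum = (\<Sum>j\<in>UNIV. S j)"
definition "DS i = (\<Sum>j\<in>UNIV. D i j ** S j)"

definition "cert = blockmat (\<lambda>i j. (if i = j then Lambda D S i else 0) - Amat D i j)"

lemma S_mul_transpose: "S i ** transpose (S i) = mat 1"
  using S_stiefel[of i] unfolding stiefel_def .

lemma first_order: "(\<Sum>j\<in>UNIV. Amat D i j ** S j) = Lambda D S i ** S i"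
  using crit unfolding second_order_critical_def by blast

lemma Lambda_mul_S: "Lambda D S i ** S i = S_sum + DS i"
  unfolding first_order[symmetric] Amat_def S_sum_def DS_def
  by (simp add: matrix_add_rdistrib sum.distrib)

lemma transpose_Amat: "transpose (Amat D i j) = Amat D j i"
  unfolding Amat_def by (simp add: transpose_add D_sym[of i j])

lemma transpose_Lambda: "transpose (Lambda D S i) = Lambda D S i"
proof -
  define F where "F = (\<Sum>j\<in>UNIV. Amat D i j ** S j ** transpose (S i))"
  have "transpose F = (\<Sum>j\<in>UNIV. S i ** transpose (S j) ** Amat D j i)"
    unfolding F_def transpose_sum by (simp add: matrix_transpose_mul transpose_Amat matrix_mul_assoc)
  then have "Lambda D S i = (1/2) *\<^sub>R (transpose F + F)"
    unfolding Lambda_def F_def by (simp only: sum.distrib)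
  then show ?thesis by (simp add: transpose_scalar transpose_add add.commute)
qed

text \<open>Second-order condition along \<open>S\<^sub>i' = a x\<^sup>T\<close> with \<open>S\<^sub>i x = 0\<close> (such \<open>x\<close> exists since \<open>p > d\<close>)
  and all other \<open>S\<^sub>j' = 0\<close>.\<close>
lemma Lambda_ge_identity: "a \<bullet> a \<le> a \<bullet> (Lambda D S i *v a)"
proof -
  have "rank (S i) \<noteq> CARD('p)" using rank_bound[of "S i"] p_gt_d by simp
  then obtain x where "x \<noteq> 0" and Sx: "S i *v x = 0"
    using matrix_nonfull_linear_equations_eq[of "S i"] by blast
  define Sd where "Sd = (\<lambda>j. if j = i then outer a x else (0::real^'p^'d))"
  have tangent: "\<forall>j. Sd j \<in> tangent (S j)"
    unfolding tangent_def Sd_def by (simp add: outer_mul_transpose_left outer_mul_transpose_right Sx)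
  have Sd_Sd: "Sd k ** transpose (Sd l) = (if k = i \<and> l = i then (x \<bullet> x) *\<^sub>R outer a a else 0)" for k l
    unfolding Sd_def by (simp add: outer_mul_transpose_outer)
  have single: "(\<Sum>k\<in>UNIV. \<Sum>l\<in>UNIV. if k = i \<and> l = i then c else 0) = (c::real)" for c
  proof -
    have "(\<Sum>k\<in>UNIV. \<Sum>l\<in>UNIV. if k = i \<and> l = i then c else 0) = (\<Sum>k\<in>UNIV. if k = i then c else 0)"
      by (rule sum.cong[OF refl]) auto
    then show ?thesis by simp
  qed
  have "(\<Sum>k\<in>UNIV. \<Sum>l\<in>UNIV. frob_inner (Amat D k l) (Sd k ** transpose (Sd l)))
      \<le> (\<Sum>k\<in>UNIV. frob_inner (Lambda D S k) (Sd k ** transpose (Sd k)))"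
    using crit tangent unfolding second_order_critical_def by blast
  then have "(x \<bullet> x) * (a \<bullet> a) \<le> (x \<bullet> x) * (a \<bullet> (Lambda D S i *v a))"
    unfolding Sd_Sd by (simp add: if_distrib frob_inner_scaleR_right frob_inner_outer Amat_def D_diag
        single cong: if_cong)
  moreover have "0 < x \<bullet> x" using \<open>x \<noteq> 0\<close> by simp
  ultimately show ?thesis by simp
qed

lemma norm_transpose_S_sum_ge:
  assumes Q: "stiefel Q" and nx: "norm x = 1"
  shows "real CARD('n) - block_dist_sq S Q / 2 \<le> norm (transpose S_sum *v x)"
proof -
  have "real CARD('n) - block_dist_sq S Q / 2 = (\<Sum>j\<in>UNIV. 1 - (frob_norm (S j - Q))\<^sup>2 / 2)"
    unfolding block_dist_sq_def by (simp add: sum_subtractf sum_divide_distrib)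
  also have "\<dots> \<le> (\<Sum>j\<in>UNIV. (transpose Q *v x) \<bullet> (transpose (S j) *v x))"
    by (rule sum_mono) (rule stiefel_inner_transpose_mv_ge[OF Q S_stiefel nx])
  also have "\<dots> = (transpose Q *v x) \<bullet> (transpose S_sum *v x)"
    unfolding S_sum_def transpose_sum sum_matrix_vector_mult by (simp add: inner_sum_right)
  also have "\<dots> \<le> norm (transpose Q *v x) * norm (transpose S_sum *v x)"
    by (rule norm_cauchy_schwarz)
  also have "\<dots> = norm (transpose S_sum *v x)"
    using stiefel_norm_transpose_mv[OF Q, of x] nx by (simp del: transpose_matrix_vector)
  finally show ?thesis .
qed

text \<open>For a unit eigenvector \<open>x\<close> of the smallest eigenvalue \<open>\<mu> \<ge> 1\<close>,
  \<open>\<mu> = \<parallel>(\<Sum>\<^sub>j S\<^sub>j + \<Sum>\<^sub>j \<Delta>\<^sub>i\<^sub>j S\<^sub>j)\<^sup>T x\<parallel>\<close>; comparing each \<open>S\<^sub>j\<close> with a common \<open>Q\<close> bounds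
  \<open>\<parallel>(\<Sum>\<^sub>j S\<^sub>j)\<^sup>T x\<parallel>\<close> from below.\<close>
lemma Lambda_form_ge:
  assumes Q: "stiefel Q"
  shows "(real CARD('n) - block_dist_sq S Q / 2 - opnorm (DS i)) * (y \<bullet> y) \<le> y \<bullet> (Lambda D S i *v y)"
proof -
  obtain x \<mu> where nx: "norm x = 1" and ev: "Lambda D S i *v x = \<mu> *\<^sub>R x"
      and min: "\<And>y. \<mu> * (y \<bullet> y) \<le> y \<bullet> (Lambda D S i *v y)"
    using symmetric_min_eigenvector[OF transpose_Lambda] by blast
  have "1 \<le> \<mu>"
    using Lambda_ge_identity[of x i] ev nx by (simp add: power2_norm_eq_inner[symmetric])
  have "transpose (S_sum + DS i) = transpose (S i) ** Lambda D S i"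
    unfolding Lambda_mul_S[symmetric] matrix_transpose_mul transpose_Lambda ..
  then have "transpose (S_sum + DS i) *v x = \<mu> *\<^sub>R (transpose (S i) *v x)"
    by (simp only: matrix_vector_mul_assoc[symmetric] ev matrix_vector_mult_scaleR)
  then have norm_mu: "norm (transpose (S_sum + DS i) *v x) = \<mu>"
    using stiefel_norm_transpose_mv[OF S_stiefel[of i], of x] nx \<open>1 \<le> \<mu>\<close> by simp
  have norm_DS: "norm (transpose (DS i) *v x) \<le> opnorm (DS i)"
    using norm_transpose_mv_le_opnorm[of "DS i" x] nx by simp
  have "real CARD('n) - block_dist_sq S Q / 2 \<le> norm (transpose S_sum *v x)"
    by (rule norm_transpose_S_sum_ge[OF Q nx])
  also have "\<dots> \<le> norm (transpose (S_sum + DS i) *v x) + norm (transpose (DS i) *v x)"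
    using norm_triangle_ineq4[of "transpose (S_sum + DS i) *v x" "transpose (DS i) *v x"]
    by (simp add: transpose_add matrix_vector_mult_add_rdistrib del: transpose_matrix_vector)
  finally have "real CARD('n) - block_dist_sq S Q / 2 - opnorm (DS i) \<le> \<mu>"
    using norm_mu norm_DS by linarith
  then have "(real CARD('n) - block_dist_sq S Q / 2 - opnorm (DS i)) * (y \<bullet> y) \<le> \<mu> * (y \<bullet> y)"
    by (rule mult_right_mono) simp
  also have "\<dots> \<le> y \<bullet> (Lambda D S i *v y)" by (rule min)
  finally show ?thesis .
qed

lemma cert_vec_block:
  "vec_block (cert *v u) i = Lambda D S i *v vec_block u i - (\<Sum>j\<in>UNIV. Amat D i j *v vec_block u j)"
proof -
  have "(if i = j then Lambda D S i else 0) *v v = (if i = j then Lambda D S i *v v else 0)" for j v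
    by simp
  then show ?thesis
    unfolding cert_def blockmat_mv by (simp add: matrix_vector_mult_diff_rdistrib sum_subtractf)
qed

lemma cert_mv_block_col: "cert *v (block_col S *v x) = 0"
  unfolding vec_block_eq_iff
proof
  fix i
  have "vec_block (cert *v (block_col S *v x)) i
      = (Lambda D S i ** S i) *v x - (\<Sum>j\<in>UNIV. Amat D i j ** S j) *v x"
    unfolding cert_vec_block block_col_mv sum_matrix_vector_mult by (simp add: matrix_vector_mul_assoc)
  then show "vec_block (cert *v (block_col S *v x)) i = vec_block 0 i"
    unfolding first_order by simp
qed

lemma cert_mul_block_col: "cert ** block_col S = 0"
  unfolding matrix_eq by (simp add: matrix_vector_mul_assoc[symmetric] cert_mv_block_col)

lemma transpose_cert: "transpose cert = cert"
proof -
  have "(\<lambda>i j. transpose ((if j = i then Lambda D S j else 0) - Amat D j i)) =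
        (\<lambda>i j. (if i = j then Lambda D S i else 0) - Amat D i j)"
    by (auto simp: fun_eq_iff transpose_diff transpose_Lambda transpose_Amat)
  then show ?thesis unfolding cert_def transpose_blockmat by simp
qed

lemma cert_form:
  "u \<bullet> (cert *v u) = (\<Sum>i\<in>UNIV. vec_block u i \<bullet> (Lambda D S i *v vec_block u i))
     - (norm (\<Sum>i\<in>UNIV. vec_block u i))\<^sup>2 - u \<bullet> (blockmat D *v u)"
proof -
  have "(\<Sum>j\<in>UNIV. Amat D i j *v vec_block u j)
      = (\<Sum>j\<in>UNIV. vec_block u j) + (\<Sum>j\<in>UNIV. D i j *v vec_block u j)" for i
    unfolding Amat_def by (simp add: matrix_vector_mult_add_rdistrib sum.distrib)
  then have "u \<bullet> (cert *v u) = (\<Sum>i\<in>UNIV. vec_block u i \<bullet> (Lambda D S i *v vec_block u i))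
      - (\<Sum>i\<in>UNIV. vec_block u i \<bullet> (\<Sum>j\<in>UNIV. vec_block u j))
      - (\<Sum>i\<in>UNIV. vec_block u i \<bullet> (\<Sum>j\<in>UNIV. D i j *v vec_block u j))"
    unfolding inner_vec_block[of u] cert_vec_block
    by (simp add: inner_diff_right inner_add_right sum_subtractf sum.distrib)
  also have "(\<Sum>i\<in>UNIV. vec_block u i \<bullet> (\<Sum>j\<in>UNIV. vec_block u j)) = (norm (\<Sum>i\<in>UNIV. vec_block u i))\<^sup>2"
    by (simp add: power2_norm_eq_inner inner_sum_left)
  also have "(\<Sum>i\<in>UNIV. vec_block u i \<bullet> (\<Sum>j\<in>UNIV. D i j *v vec_block u j)) = u \<bullet> (blockmat D *v u)"
    unfolding inner_vec_block[of u "blockmat D *v u"] blockmat_mv ..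
  finally show ?thesis .
qed

lemma cert_form_ge:
  assumes Q: "stiefel Q" and DS_le: "\<And>i. opnorm (DS i) \<le> m"
  shows "(real CARD('n) - block_dist_sq S Q / 2 - m - opnorm (blockmat D)) * (u \<bullet> u)
           - (norm (\<Sum>i\<in>UNIV. vec_block u i))\<^sup>2 \<le> u \<bullet> (cert *v u)"
proof -
  let ?\<sigma> = "real CARD('n) - block_dist_sq S Q / 2"
  have "(?\<sigma> - m) * (u \<bullet> u) = (\<Sum>i\<in>UNIV. (?\<sigma> - m) * (vec_block u i \<bullet> vec_block u i))"
    unfolding inner_vec_block[of u u] by (simp add: sum_distrib_left)
  also have "\<dots> \<le> (\<Sum>i\<in>UNIV. vec_block u i \<bullet> (Lambda D S i *v vec_block u i))"
  proof (rule sum_mono)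
    fix i
    have "(?\<sigma> - m) * (vec_block u i \<bullet> vec_block u i) \<le> (?\<sigma> - opnorm (DS i)) * (vec_block u i \<bullet> vec_block u i)"
      by (rule mult_right_mono) (use DS_le[of i] in simp_all)
    also have "\<dots> \<le> vec_block u i \<bullet> (Lambda D S i *v vec_block u i)" by (rule Lambda_form_ge[OF Q])
    finally show "(?\<sigma> - m) * (vec_block u i \<bullet> vec_block u i) \<le> vec_block u i \<bullet> (Lambda D S i *v vec_block u i)" .
  qed
  finally show ?thesis
    using form_le_opnorm[of u "blockmat D"] unfolding cert_form by (simp add: algebra_simps)
qed

lemma norm_sum_blocks_le:
  assumes Q: "stiefel Q" and perp: "transpose (block_col S) *v w = 0"
  shows "(norm (\<Sum>i\<in>UNIV. vec_block w i))\<^sup>2 \<le> block_dist_sq S Q * (w \<bullet> w)"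
proof -
  define N where "N = block_col (\<lambda>i. Q - S i)"
  have "transpose N *v w = (\<Sum>i\<in>UNIV. transpose Q *v vec_block w i) - transpose (block_col S) *v w"
    unfolding N_def transpose_block_col_mv
    by (simp add: transpose_diff matrix_vector_mult_diff_rdistrib sum_subtractf del: transpose_matrix_vector)
  also have "\<dots> = transpose Q *v (\<Sum>i\<in>UNIV. vec_block w i)"
    using perp by (simp add: matrix_vector_mult_sum del: transpose_matrix_vector)
  finally have "norm (\<Sum>i\<in>UNIV. vec_block w i) = norm (transpose N *v w)"
    using stiefel_norm_transpose_mv[OF Q] by (simp del: transpose_matrix_vector)
  also have "\<dots> \<le> frob_norm N * norm w"
    by (rule order_trans[OF norm_transpose_mv_le_opnorm mult_right_mono[OF opnorm_le_frob_norm]]) simp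
  finally have "(norm (\<Sum>i\<in>UNIV. vec_block w i))\<^sup>2 \<le> (frob_norm N)\<^sup>2 * (norm w)\<^sup>2"
    by (metis norm_ge_zero power_mono power_mult_distrib)
  moreover have "(frob_norm N)\<^sup>2 = block_dist_sq S Q"
    unfolding frob_norm_power2 N_def frob_inner_block_col block_dist_sq_def
    by (simp add: frob_norm_power2[symmetric] frob_norm_minus_commute[of Q])
  ultimately show ?thesis by (simp add: power2_norm_eq_inner)
qed

end

section \<open>The certificate under the gap condition\<close>

locale certified_critical_point = stiefel_critical_point D S
  for D :: "'n::finite \<Rightarrow> 'n \<Rightarrow> real^'d::finite^'d" and S :: "'n \<Rightarrow> real^'p::finite^'d" +
  fixes m r :: real
  assumes DS_le: "\<And>i. opnorm (\<Sum>j\<in>UNIV. D i j ** S j) \<le> m"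
    and dF_le: "dF S \<le> r"
    and gap: "3/2 * r\<^sup>2 + m + opnorm (blockmat D) \<le> real CARD('n)"
    and gap_pos: "m + opnorm (blockmat D) < real CARD('n)"
begin

lemma dF_power2_le: "(dF S)\<^sup>2 \<le> r\<^sup>2"
proof -
  have "0 \<le> dF S" by (rule le_dF[of S undefined, OF S_stiefel]) (simp add: block_dist_sq_nonneg)
  then show ?thesis using dF_le by (rule power_mono[rotated])
qed

lemma cert_form_ge_perp:
  assumes Q: "stiefel Q" and perp: "transpose (block_col S) *v z = 0"
  shows "(real CARD('n) - m - opnorm (blockmat D) - 3/2 * block_dist_sq S Q) * (z \<bullet> z) \<le> z \<bullet> (cert *v z)"
  using cert_form_ge[OF Q, of m z] norm_sum_blocks_le[OF Q perp] DS_le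
  unfolding DS_def by (simp add: algebra_simps)

text \<open>If \<open>\<langle>z, C z\<rangle> < 0\<close>, the lower bound above would keep every
  \<open>Q \<in> St(d,p)\<close> farther from \<open>S\<close> than \<open>d\<^sub>F(S,Z) \<le> r\<close> allows.\<close>
lemma cert_form_nonneg_perp:
  assumes perp: "transpose (block_col S) *v z = 0"
  shows "0 \<le> z \<bullet> (cert *v z)"
proof (rule ccontr)
  let ?g = "real CARD('n) - m - opnorm (blockmat D)"
  assume "\<not> 0 \<le> z \<bullet> (cert *v z)"
  then have neg: "z \<bullet> (cert *v z) / (z \<bullet> z) < 0"
    by (cases "z = 0") (simp_all add: divide_neg_pos)
  then have zz: "0 < z \<bullet> z" by (cases "z = 0") simp_all
  define t where "t = 2/3 * (?g - z \<bullet> (cert *v z) / (z \<bullet> z))"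
  have "t \<le> block_dist_sq S Q" if "stiefel Q" for Q
  proof -
    have "?g - 3/2 * block_dist_sq S Q \<le> z \<bullet> (cert *v z) / (z \<bullet> z)"
      using cert_form_ge_perp[OF that perp] zz by (simp add: pos_le_divide_eq)
    then show ?thesis unfolding t_def by simp
  qed
  then have "t \<le> (dF S)\<^sup>2" by (rule le_dF_power2[of S undefined, OF S_stiefel])
  then show False using dF_power2_le gap neg unfolding t_def by simp
qed

lemma cert_form_nonneg: "0 \<le> u \<bullet> (cert *v u)"
proof -
  let ?R = "range (\<lambda>x. block_col S *v x)"
  obtain y z where y: "y \<in> span ?R" and z_perp: "\<And>w. w \<in> span ?R \<Longrightarrow> orthogonal z w" and u: "u = y + z"
    using orthogonal_subspace_decomp_exists[of ?R u] by blast
  have span_R: "span ?R = ?R" by (rule span_eq_iff[THEN iffD2, OF range_mv_subspace])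
  obtain x where yx: "y = block_col S *v x" using y unfolding span_R by blast
  have perp: "transpose (block_col S) *v z = 0"
  proof -
    let ?v = "transpose (block_col S) *v z"
    have "z \<bullet> (block_col S *v ?v) = 0" using z_perp[of "block_col S *v ?v"] span_R
      by (simp add: orthogonal_def del: transpose_matrix_vector)
    then have "?v \<bullet> ?v = 0" by (simp only: transpose_mv_inner)
    then show ?thesis by simp
  qed
  have Cy: "cert *v y = 0" unfolding yx by (rule cert_mv_block_col)
  then have "y \<bullet> (cert *v z) = 0" using symmetric_form_swap[OF transpose_cert, of y z] by simp
  then have "u \<bullet> (cert *v u) = z \<bullet> (cert *v z)"
    unfolding u using Cy by (simp add: matrix_vector_right_distrib inner_add_left)
  then show ?thesis using cert_form_nonneg_perp[OF perp] by simp
qed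

lemma psd_cert: "psd cert"
  unfolding psd_def using transpose_cert cert_form_nonneg by blast

lemma cert_kernel_Zmat:
  assumes "cert *v u = 0" and "transpose Zmat *v u = 0"
  shows "u = 0"
proof -
  let ?g = "real CARD('n) - m - opnorm (blockmat D)"
  have "\<exists>Q. stiefel Q \<and> block_dist_sq S Q < 2 * ?g"
  proof (rule ccontr)
    assume "\<not> ?thesis"
    then have "2 * ?g \<le> (dF S)\<^sup>2"
      by (intro le_dF_power2[of S undefined, OF S_stiefel]) (simp add: not_less)
    then show False using dF_power2_le gap gap_pos by simp
  qed
  then obtain Q where Q: "stiefel Q" and Q_close: "block_dist_sq S Q < 2 * ?g" by blast
  have "(real CARD('n) - block_dist_sq S Q / 2 - m - opnorm (blockmat D)) * (u \<bullet> u) \<le> 0"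
    using cert_form_ge[OF Q, of m u] DS_le assms
    unfolding DS_def transpose_Zmat_mv by simp
  moreover have "0 < real CARD('n) - block_dist_sq S Q / 2 - m - opnorm (blockmat D)"
    using Q_close by simp
  ultimately have "u \<bullet> u \<le> 0" by (simp add: mult_le_0_iff)
  then have "u \<bullet> u = 0" using inner_ge_zero[of u] by linarith
  then show ?thesis by simp
qed

text \<open>Any fixed block serves as reference; \<open>R\<^sub>i = S\<^sub>i S\<^sub>i\<^sub>0\<^sup>T\<close> will be the maximizer of (P).\<close>
definition "i0 = (undefined :: 'n)"
definition "R i = S i ** transpose (S i0)"

lemma R_i0: "R i0 = mat 1"
  unfolding R_def by (rule S_mul_transpose)

lemma vec_block_R_i0: "vec_block (block_col R *v y) i0 = y"
  unfolding block_col_mv R_i0 by simp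

lemma dim_cert_kernel_le: "dim {u. cert *v u = 0} \<le> CARD('d)"
proof -
  let ?K = "{u. cert *v u = 0}"
  have "inj_on (\<lambda>u. transpose Zmat *v u) (span ?K)"
    unfolding span_eq_iff[THEN iffD2, OF kernel_subspace]
  proof (rule inj_onI)
    fix u v assume "u \<in> ?K" "v \<in> ?K" "transpose Zmat *v u = transpose Zmat *v v"
    then have "cert *v (u - v) = 0" "transpose Zmat *v (u - v) = 0"
      by (simp_all add: matrix_vector_mult_diff_distrib del: transpose_matrix_vector)
    then have "u - v = 0" by (rule cert_kernel_Zmat)
    then show "u = v" by simp
  qed
  then have "dim ((\<lambda>u. transpose Zmat *v u) ` ?K) = dim ?K"
    by (rule dim_image_eq[OF matrix_vector_mul_linear])
  then show ?thesis using dim_subset_UNIV_cart[of "(\<lambda>u. transpose Zmat *v u) ` ?K"] by simp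
qed

text \<open>Since \<open>C S = 0\<close> and \<open>dim ker C \<le> d\<close>, the kernel of \<open>C\<close> is the column space of \<open>S\<close>,
  which is also that of \<open>[R\<^sub>1; \<dots>; R\<^sub>n]\<close>.\<close>
lemma cert_kernel_eq: "{u. cert *v u = 0} = range (\<lambda>y. block_col R *v y)"
proof (rule subspace_dim_equal[symmetric, OF range_mv_subspace kernel_subspace])
  show "range (\<lambda>y. block_col R *v y) \<subseteq> {u. cert *v u = 0}"
  proof clarify
    fix y
    have "block_col R = block_col S ** transpose (S i0)"
      unfolding R_def block_col_mul ..
    then show "cert *v (block_col R *v y) = 0"
      by (simp add: matrix_vector_mul_assoc[symmetric] cert_mv_block_col del: transpose_matrix_vector)
  qed
  have "inj_on (\<lambda>y. block_col R *v y) (span UNIV)"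
    by (rule inj_onI) (metis vec_block_R_i0)
  then have "dim (range (\<lambda>y. block_col R *v y)) = CARD('d)"
    using dim_image_eq[OF matrix_vector_mul_linear, of "block_col R" UNIV] by simp
  then show "dim {u. cert *v u = 0} \<le> dim (range (\<lambda>y. block_col R *v y))"
    using dim_cert_kernel_le by simp
qed

lemma cert_kernel_elem:
  assumes "cert *v v = 0"
  shows "v = block_col R *v vec_block v i0"
proof -
  have "v \<in> range (\<lambda>y. block_col R *v y)"
    using assms unfolding cert_kernel_eq[symmetric] by simp
  then obtain y where "v = block_col R *v y" by blast
  then show ?thesis by (simp add: vec_block_R_i0)
qed

lemma S_eq_R_mul: "S i = R i ** S i0"
  unfolding matrix_eq
proof
  fix x
  have "block_col S *v x = block_col R *v (S i0 *v x)"
    using cert_kernel_elem[OF cert_mv_block_col[of x]] by (simp add: block_col_mv)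
  then have "vec_block (block_col S *v x) i = vec_block (block_col R *v (S i0 *v x)) i" by simp
  then show "S i *v x = (R i ** S i0) *v x"
    unfolding block_col_mv by (simp add: matrix_vector_mul_assoc)
qed

lemma S_mul_transpose_S: "S i ** transpose (S j) = R i ** transpose (R j)"
proof -
  have "S i ** transpose (S j) = R i ** (S i0 ** transpose (S i0)) ** transpose (R j)"
    by (subst (1 2) S_eq_R_mul) (simp add: matrix_transpose_mul matrix_mul_assoc)
  then show ?thesis by (simp add: S_mul_transpose)
qed

lemma R_orthogonal: "R i ** transpose (R i) = mat 1"
  using S_mul_transpose_S[of i i] S_mul_transpose[of i] by simp

definition "X = blockmat (\<lambda>i j. S i ** transpose (S j))"

lemma X_R: "X = block_col R ** transpose (block_col R)"
  unfolding X_def block_col_mul_transpose S_mul_transpose_S ..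

lemma X_feasible: "sdp_feasible X"
  unfolding X_def by (rule sdp_feasible_blockmat[OF S_mul_transpose])

lemma objective_eq:
  assumes Y: "sdp_feasible Y"
  shows "frob_inner (blockmat (Amat D)) Y = (\<Sum>i\<in>UNIV. frob_inner (Lambda D S i) (mat 1)) - frob_inner cert Y"
proof -
  let ?L = "blockmat (\<lambda>i j. if i = j then Lambda D S i else 0)"
  have "frob_inner ?L Y = frob_inner ?L (blockmat (mat_block Y))" by simp
  also have "\<dots> = (\<Sum>i\<in>UNIV. \<Sum>j\<in>UNIV. frob_inner (if i = j then Lambda D S i else 0) (mat_block Y i j))"
    by (rule frob_inner_blockmat)
  also have "\<dots> = (\<Sum>i\<in>UNIV. frob_inner (Lambda D S i) (mat_block Y i i))"
  proof -
    have "frob_inner (if i = j then Lambda D S i else 0) (mat_block Y i j)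
        = (if i = j then frob_inner (Lambda D S i) (mat_block Y i i) else 0)" for i j
      by simp
    then show ?thesis by simp
  qed
  also have "\<dots> = (\<Sum>i\<in>UNIV. frob_inner (Lambda D S i) (mat 1))"
    using sdp_feasible_diag_block[OF Y] by simp
  finally show ?thesis
    unfolding cert_def blockmat_diff[symmetric] frob_inner_diff_left by simp
qed

lemma frob_inner_cert_X: "frob_inner cert X = 0"
  unfolding X_def block_col_mul_transpose[symmetric] frob_inner_mul_transpose cert_mul_block_col
  by simp

lemma frob_inner_cert_nonneg:
  assumes "psd Y"
  shows "0 \<le> frob_inner cert Y"
proof -
  obtain vs where "Y = sum_list (map (\<lambda>v. outer v v) vs)"
    using psd_sum_outer assms by blast
  then have "frob_inner cert Y = sum_list (map (\<lambda>v. v \<bullet> (cert *v v)) vs)"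
    by (simp add: frob_inner_sum_outer)
  then show ?thesis by (auto intro!: sum_list_nonneg cert_form_nonneg)
qed

text \<open>A feasible \<open>Y = \<Sum> v v\<^sup>T\<close> with \<open>\<langle>C, Y\<rangle> = 0\<close> has every \<open>v\<close> in \<open>ker C\<close>, so
  \<open>Y = [R\<^sub>i G R\<^sub>j\<^sup>T]\<^sub>i\<^sub>j\<close> for a Gram matrix \<open>G\<close>; the diagonal block at \<open>i0\<close> forces \<open>G = I\<close>.\<close>
lemma frob_inner_cert_eq_0:
  assumes Y: "sdp_feasible Y" and C0: "frob_inner cert Y = 0"
  shows "Y = X"
proof -
  obtain vs where vs: "Y = sum_list (map (\<lambda>v. outer v v) vs)"
    using psd_sum_outer Y unfolding sdp_feasible_def by blast
  have "sum_list (map (\<lambda>v. v \<bullet> (cert *v v)) vs) = 0"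
    using C0 unfolding vs frob_inner_sum_outer .
  then have "\<forall>v\<in>set vs. v \<bullet> (cert *v v) = 0"
    using sum_list_nonneg_eq_0_iff[of "map (\<lambda>v. v \<bullet> (cert *v v)) vs"] cert_form_nonneg by auto
  then have "\<forall>v\<in>set vs. cert *v v = 0"
    using psd_form_zero_imp_kernel[OF psd_cert] by blast
  define ys where "ys = map (\<lambda>v. vec_block v i0) vs"
  have "vs = map (\<lambda>y. block_col R *v y) ys"
    unfolding ys_def map_map o_def using \<open>\<forall>v\<in>set vs. cert *v v = 0\<close> cert_kernel_elem
    by (simp add: map_idI[symmetric])
  then have "Y = block_col R ** sum_list (map (\<lambda>y. outer y y) ys) ** transpose (block_col R)"
    unfolding vs sum_outer_map_mv[symmetric] by simp
  then obtain G where YG: "Y = block_col R ** G ** transpose (block_col R)" by blast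
  then have "Y = blockmat (\<lambda>i j. R i ** G ** transpose (R j))"
    unfolding block_col_mul[of R G] block_col_mul_transpose .
  then have "G = mat 1"
    using sdp_feasible_diag_block[OF Y, of i0] R_i0 by simp
  then show ?thesis unfolding YG X_R by simp
qed

lemma X_unique_maximizer:
  assumes "sdp_feasible Y" and "Y \<noteq> X"
  shows "frob_inner (blockmat (Amat D)) Y < frob_inner (blockmat (Amat D)) X"
  using objective_eq[OF assms(1)] objective_eq[OF X_feasible] frob_inner_cert_X
    frob_inner_cert_nonneg[of Y] frob_inner_cert_eq_0[OF assms(1)] assms
  unfolding sdp_feasible_def by force

lemma rank_X: "rank X = CARD('d)"
proof (rule antisym)
  have "rank X \<le> rank (block_col R)"
    unfolding X_R by (rule rank_mul_le_left)
  then show "rank X \<le> CARD('d)"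
    using rank_bound[of "block_col R"] by simp
  have RtR: "transpose (block_col R) ** block_col R = real CARD('n) *\<^sub>R mat 1"
  proof -
    have "transpose (R i) ** R i = mat 1" for i
      using R_orthogonal matrix_left_right_inverse by blast
    then show ?thesis
      unfolding transpose_block_col_mul by (simp add: sum_constant_scaleR del: sum_constant)
  qed
  have "transpose (block_col R) ** X ** block_col R
      = (transpose (block_col R) ** block_col R) ** (transpose (block_col R) ** block_col R)"
    unfolding X_R by (simp add: matrix_mul_assoc)
  also have "\<dots> = (real CARD('n) * real CARD('n)) *\<^sub>R mat 1"
    unfolding RtR by (simp add: matrix_scalar_ac scalar_matrix_assoc)
  finally have "transpose (block_col R) ** X ** block_col R = (real CARD('n) * real CARD('n)) *\<^sub>R mat 1" .
  then have "CARD('d) = rank (transpose (block_col R) ** X ** block_col R)"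
    by (simp add: rank_scaleR_mat_1)
  also have "\<dots> \<le> rank X"
    using rank_mul_le_left rank_mul_le_right order_trans by metis
  finally show "CARD('d) \<le> rank X" .
qed

lemma globally_optimal:
  "let X = blockmat (\<lambda>i j. S i ** transpose (S j));
       A = Zmat ** transpose Zmat + blockmat D
   in sdp_feasible X
    \<and> (\<forall>Y. sdp_feasible Y \<and> Y \<noteq> X \<longrightarrow> frob_inner A Y < frob_inner A X)
    \<and> rank X = CARD('d)
    \<and> (\<exists>R. (\<forall>i. orthogonal_mat (R i))
         \<and> (\<forall>R'. (\<forall>i. orthogonal_mat (R' i)) \<longrightarrow> Pobj D R' \<le> Pobj D R)
         \<and> (\<forall>R'. (\<forall>i. orthogonal_mat (R' i)) \<and> Pobj D R' = Pobj D R \<longrightarrow>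
               blockmat (\<lambda>i j. R' i ** transpose (R' j)) = X)
         \<and> X = blockmat (\<lambda>i j. R i ** transpose (R j)))"
proof -
  have Pobj_eq: "Pobj D R' = frob_inner (blockmat (Amat D)) (blockmat (\<lambda>i j. R' i ** transpose (R' j)))" for R'
    unfolding Pobj_def frob_inner_blockmat by (simp add: frob_inner_commute)
  have XR: "X = blockmat (\<lambda>i j. R i ** transpose (R j))"
    unfolding X_def S_mul_transpose_S ..
  have "Pobj D R' \<le> Pobj D R \<and> (Pobj D R' = Pobj D R \<longrightarrow> blockmat (\<lambda>i j. R' i ** transpose (R' j)) = X)"
    if "\<forall>i. orthogonal_mat (R' i)" for R'
  proof -
    have "sdp_feasible (blockmat (\<lambda>i j. R' i ** transpose (R' j)))"
      using that by (intro sdp_feasible_blockmat) (simp add: orthogonal_mat_def)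
    then show ?thesis
      using X_unique_maximizer unfolding Pobj_eq XR[symmetric] by fastforce
  qed
  moreover have "\<forall>i. orthogonal_mat (R i)"
    unfolding orthogonal_mat_def using R_orthogonal by blast
  ultimately show ?thesis
    unfolding Let_def X_def[symmetric] Zmat_blockmat
    using X_feasible X_unique_maximizer rank_X XR by blast
qed

end

section \<open>Bounding the off-diagonal sums\<close>

lemma offdiag_sum_eq:
  fixes D :: "'n::finite \<Rightarrow> 'n \<Rightarrow> real^'d::finite^'d" and S :: "'n \<Rightarrow> real^'p::finite^'d"
  assumes "D i i = 0"
  shows "(\<Sum>j\<in>UNIV - {i}. D i j ** S j) = (\<Sum>j\<in>UNIV. D i j ** S j)"
proof -
  have "(\<Sum>j\<in>UNIV. D i j ** S j) = D i i ** S i + (\<Sum>j\<in>UNIV - {i}. D i j ** S j)"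
    by (rule sum.remove) simp_all
  then show ?thesis using assms by simp
qed

text \<open>Split \<open>S = Z Q + (S - Z Q)\<close> for a Stiefel \<open>Q\<close> and let \<open>Q\<close> approach the minimizer in \<open>d\<^sub>F\<close>.\<close>
lemma offdiag_sum_opnorm_le:
  fixes D :: "'n::finite \<Rightarrow> 'n \<Rightarrow> real^'d::finite^'d" and S :: "'n \<Rightarrow> real^'p::finite^'d"
  assumes D_diag: "\<And>i. D i i = 0" and S_stiefel: "\<And>i. stiefel (S i)" and dF_le: "dF S \<le> r"
  shows "opnorm (\<Sum>j\<in>UNIV - {i}. D i j ** S j) \<le> opnorm (block_row D i) * r + opnorm (block_rowT D i ** Zmat)"
proof -
  let ?E = "\<Sum>j\<in>UNIV - {i}. D i j ** S j"
  let ?a = "opnorm (block_rowT D i ** Zmat)" and ?b = "opnorm (block_row D i)"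
  have E: "?E = block_rowT D i ** block_col S"
    unfolding offdiag_sum_eq[of D i S, OF D_diag] block_rowT_mul_block_col ..
  have b: "?b = opnorm (block_rowT D i)"
    unfolding block_row_def opnorm_transpose ..
  have bound: "opnorm ?E \<le> ?a + ?b * sqrt (block_dist_sq S Q)" if Q: "stiefel Q" for Q
  proof -
    define N where "N = block_col (\<lambda>j. S j - Q)"
    have "block_col S = Zmat ** Q + N"
      unfolding N_def Zmat_block_col block_col_mul block_col_diff[symmetric] by simp
    then have "?E = (block_rowT D i ** Zmat) ** Q + block_rowT D i ** N"
      unfolding E by (simp add: matrix_add_ldistrib matrix_mul_assoc)
    then have "opnorm ?E \<le> opnorm ((block_rowT D i ** Zmat) ** Q) + opnorm (block_rowT D i ** N)"
      by (simp only: opnorm_add_le)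
    also have "\<dots> \<le> ?a * opnorm Q + opnorm (block_rowT D i) * opnorm N"
      by (intro add_mono opnorm_matrix_mul_le)
    also have "\<dots> \<le> ?a * 1 + ?b * frob_norm N"
      unfolding b by (intro add_mono mult_left_mono stiefel_opnorm_le_1[OF Q] opnorm_le_frob_norm opnorm_nonneg)
    also have "frob_inner N N = block_dist_sq S Q"
      unfolding N_def frob_inner_block_col block_dist_sq_def frob_norm_power2 ..
    then have "frob_norm N = sqrt (block_dist_sq S Q)"
      unfolding frob_norm_def by simp
    finally show ?thesis by simp
  qed
  show ?thesis
  proof (cases "?b = 0")
    case True
    then show ?thesis using bound[OF S_stiefel[of i]] by simp
  next
    case False
    then have "0 < ?b" using opnorm_nonneg[of "block_row D i"] by simp
    have "(opnorm ?E - ?a) / ?b \<le> dF S"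
    proof (rule le_dF[of S i, OF S_stiefel])
      fix Q :: "real^'p^'d"
      assume "stiefel Q"
      then have "opnorm ?E - ?a \<le> ?b * sqrt (block_dist_sq S Q)" using bound by fastforce
      then show "(opnorm ?E - ?a) / ?b \<le> sqrt (block_dist_sq S Q)"
        using \<open>0 < ?b\<close> by (simp add: divide_le_eq mult.commute)
    qed
    then have "opnorm ?E - ?a \<le> dF S * ?b" using \<open>0 < ?b\<close> by (simp add: divide_le_eq)
    moreover have "dF S * ?b \<le> ?b * r"
      using mult_right_mono[OF dF_le, of ?b] \<open>0 < ?b\<close> by (simp add: mult.commute)
    ultimately show ?thesis by linarith
  qed
qed

lemma Max_offdiag_sum_opnorm_le:
  fixes D :: "'n::finite \<Rightarrow> 'n \<Rightarrow> real^'d::finite^'d" and S :: "'n \<Rightarrow> real^'p::finite^'d"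
  assumes "\<And>i. D i i = 0" and "\<And>i. stiefel (S i)" and "dF S \<le> r" and "0 \<le> r"
  shows "Max (range (\<lambda>i. opnorm (\<Sum>j\<in>UNIV - {i}. D i j ** S j)))
           \<le> r * Max (range (\<lambda>i. opnorm (block_row D i))) + Max (range (\<lambda>i. opnorm (block_rowT D i ** Zmat)))"
proof -
  have "opnorm (\<Sum>j\<in>UNIV - {i}. D i j ** S j)
      \<le> r * Max (range (\<lambda>i. opnorm (block_row D i))) + Max (range (\<lambda>i. opnorm (block_rowT D i ** Zmat)))" for i
  proof -
    have "opnorm (block_row D i) * r \<le> r * Max (range (\<lambda>i. opnorm (block_row D i)))"
      using \<open>0 \<le> r\<close> by (simp add: mult.commute mult_left_mono)
    moreover have "opnorm (block_rowT D i ** Zmat) \<le> Max (range (\<lambda>i. opnorm (block_rowT D i ** Zmat)))"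
      by simp
    ultimately show ?thesis using offdiag_sum_opnorm_le[of D S r i, OF assms(1-3)] by linarith
  qed
  then show ?thesis by simp
qed

lemma blockmat_zeroD: "blockmat D = 0 \<Longrightarrow> D i j = 0"
  using mat_block_blockmat[of D i j] by (simp add: mat_block_def vec_eq_iff)

theorem proposition2:
  fixes D :: "'n::finite \<Rightarrow> 'n \<Rightarrow> real^'d::finite^'d"
    and S :: "'n \<Rightarrow> real^'p::finite^'d"
    and \<delta> :: real
  assumes p_gt_d: "CARD('p) > CARD('d)"
    and D_sym: "\<And>i j. D j i = transpose (D i j)"
    and D_diag: "\<And>i. D i i = 0"
    and S_stiefel: "\<And>i. stiefel (S i)"
    and delta_pos: "\<delta> > 0"
    and crit: "second_order_critical D S"
    and prox: "dF S \<le> \<delta> * sqrt (real CARD('d) / real CARD('n)) * opnorm (blockmat D)"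
  defines "M \<equiv> Max (range (\<lambda>i. opnorm (\<Sum>j\<in>UNIV - {i}. D i j ** S j)))"
    and "B \<equiv> \<delta> * sqrt (real CARD('d) / real CARD('n)) * opnorm (blockmat D)
               * Max (range (\<lambda>i. opnorm (block_row D i)))
             + Max (range (\<lambda>i. opnorm (block_rowT D i ** Zmat)))"
    and "conclusion \<equiv>
           (let X = blockmat (\<lambda>i j. S i ** transpose (S j));
                A = Zmat ** transpose Zmat + blockmat D
            in sdp_feasible X
             \<and> (\<forall>Y. sdp_feasible Y \<and> Y \<noteq> X \<longrightarrow> frob_inner A Y < frob_inner A X)
             \<and> rank X = CARD('d)
             \<and> (\<exists>R. (\<forall>i. orthogonal_mat (R i))
                  \<and> (\<forall>R'. (\<forall>i. orthogonal_mat (R' i)) \<longrightarrow> Pobj D R' \<le> Pobj D R)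
                  \<and> (\<forall>R'. (\<forall>i. orthogonal_mat (R' i)) \<and> Pobj D R' = Pobj D R \<longrightarrow>
                        blockmat (\<lambda>i j. R' i ** transpose (R' j)) = X)
                  \<and> X = blockmat (\<lambda>i j. R i ** transpose (R j))))"
  shows "M \<le> B
     \<and> (real CARD('n) \<ge> 3 * \<delta>\<^sup>2 * real CARD('d) * (opnorm (blockmat D))\<^sup>2 / (2 * real CARD('n))
             + M + opnorm (blockmat D) \<longrightarrow> conclusion)
     \<and> (real CARD('n) \<ge> 3 * \<delta>\<^sup>2 * real CARD('d) * (opnorm (blockmat D))\<^sup>2 / (2 * real CARD('n))
             + B + opnorm (blockmat D) \<longrightarrow> conclusion)"
proof -
  define r where "r = \<delta> * sqrt (real CARD('d) / real CARD('n)) * opnorm (blockmat D)"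
  have "0 \<le> r" unfolding r_def using delta_pos opnorm_nonneg[of "blockmat D"] by simp
  have "M \<le> B"
    using Max_offdiag_sum_opnorm_le[of D S r, OF D_diag S_stiefel prox[folded r_def] \<open>0 \<le> r\<close>]
    unfolding M_def B_def r_def by (simp add: mult_ac)
  have r_sq: "3 * \<delta>\<^sup>2 * real CARD('d) * (opnorm (blockmat D))\<^sup>2 / (2 * real CARD('n)) = 3/2 * r\<^sup>2"
    unfolding r_def by (simp add: power_mult_distrib)
  have optimal: conclusion if gap: "3/2 * r\<^sup>2 + M + opnorm (blockmat D) \<le> real CARD('n)"
  proof -
    have DS_le: "opnorm (\<Sum>j\<in>UNIV. D i j ** S j) \<le> M" for i
      unfolding M_def offdiag_sum_eq[of D i S, OF D_diag, symmetric] by simp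
    have gap_pos: "M + opnorm (blockmat D) < real CARD('n)"
    proof (cases "r = 0")
      case True
      then have "blockmat D = 0" unfolding r_def using delta_pos by (simp add: opnorm_eq_0)
      then show ?thesis unfolding M_def by (simp add: blockmat_zeroD)
    next
      case False
      then have "0 < r\<^sup>2" by simp
      then show ?thesis using gap by linarith
    qed
    interpret certified_critical_point D S M r
      by unfold_locales
        (fact p_gt_d D_sym D_diag S_stiefel crit DS_le prox[folded r_def] gap gap_pos)+
    show ?thesis unfolding conclusion_def by (rule globally_optimal)
  qed
  show ?thesis
    unfolding r_sq using optimal \<open>M \<le> B\<close> by (smt (verit))
qed

end
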